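(* Let $f:\Gamma\to\Gamma$ be an irreducible, expanding graph map with stacks $\mathcal{K}_1,\dots,\mathcal{K}_p$ and final edges $\alpha_1,\dots,\alpha_p$. Then for every $i$ and every integer $d\ge0$, $$|f^{d+1}(\alpha_i)|\ge 1+\sum_{\mathcal{K}_j\in B_d(\mathcal{K}_i)}\omega(\mathcal{K}_j).$$
   Context: A graph $\Gamma$ is a finite 1-dimensional CW complex with a chosen orientation on each edge; $\mathcal{E}\Gamma$ is its set of edges, $\bar e$ is the reverse of $e$, $\iota,\tau$ the endpoints. An edge path is a nonempty concatenation $u=e_1\cdots e_k$ of oriented edges with $\tau(e_i)=\iota(e_{i+1})$; $|u|=k$ counts edges without cancelling backtracks; $u$ traverses $e$ if $e$ or $\bar e$ occurs in it. A graph map $f:\Gamma\to\Gamma$ assigns to vertices vertices and to each oriented edge $e$ an edge path $f(e)$ with $\iota(f(e))=f(\iota(e))$, $f(\bar e)=\overline{f(e)}$; powers are compositions, applied to paths by concatenation without tightening. $T(f)$ has $(i,j)$ entry the number of times $f(e_i)$ traverses $e_j$; $f$ is irreducible if $T(f)$ is irreducible and every vertex has valence $\ge3$; expanding if $|f^n(e)|\to\infty$ for every edge. Stacks: $e$ is mixing if $|f(e)|>1$; surplus if non-mixing and $f(e)\in\{f(u),\overline{f(u)}\}$ for some edge $u\notin\{e,\bar e\}$. Stacks are the classes of the equivalence relation on $\mathcal{E}\Gamma$ (unoriented edges) generated by $e\sim f(e)$ for $e$ non-mixing and non-surplus. Each stack has the form $\mathcal{K}=\{e,f(e),\dots,f^s(e)\}$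 with only $f^s(e)$ mixing or surplus; $f^s(e)$ is the final edge. $\alpha_i$ is the final edge of $\mathcal{K}_i$, and the weight is $\omega(\mathcal{K}_i)=|f(\alpha_i)|-1$. The stack graph $\mathcal{SG}(f)$ is the directed graph with vertices $\mathcal{K}_1,\dots,\mathcal{K}_p$ and a directed edge $[\mathcal{K}_i,\mathcal{K}_j]$ whenever $f(\alpha_i)$ contains an edge of $\mathcal{K}_j$; its length is $s([\mathcal{K}_i,\mathcal{K}_j])=\min\{s\ge1:f^s(\alpha_i)\text{ traverses }\alpha_j\}$, and a directed path $P=E_1\cdots E_k$ has length $s(P)=\sum s(E_i)$. The directed ball is $B_d(\mathcal{K}_i)=\{\mathcal{K}_j:\text{there is a directed path }P\text{ from }\mathcal{K}_i\text{ to }\mathcal{K}_j\text{ with }s(P)\le d\}$, where the empty path (length $0$) is allowed, so $B_0(\mathcal{K}_i)=\{\mathcal{K}_i\}$. *)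

theory Defs
  imports Main
begin

text \<open>
  A graph is given by a finite vertex set V, a finite set E of (unoriented) edges,
  each with a chosen positive orientation with initial vertex ini e and terminal
  vertex ter e.  An oriented edge is a pair (e, b): b = True is the chosen
  orientation, b = False its reverse.
\<close>

type_synonym 'e oedge = "'e \<times> bool"

definition flip :: "'e oedge \<Rightarrow> 'e oedge" where
  "flip x = (fst x, \<not> snd x)"

definition rev_path :: "'e oedge list \<Rightarrow> 'e oedge list" where
  "rev_path p = rev (map flip p)"

definition oinit :: "('e \<Rightarrow> 'v) \<Rightarrow> ('e \<Rightarrow> 'v) \<Rightarrow> 'e oedge \<Rightarrow> 'v" where
  "oinit ini ter x = (if snd x then ini (fst x) else ter (fst x))"

definition oterm :: "('e \<Rightarrow> 'v) \<Rightarrow> ('e \<Rightarrow> 'v) \<Rightarrow> 'e oedge \<Rightarrow> 'v" where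
  "oterm ini ter x = (if snd x then ter (fst x) else ini (fst x))"

definition is_edge_path :: "'e set \<Rightarrow> ('e \<Rightarrow> 'v) \<Rightarrow> ('e \<Rightarrow> 'v) \<Rightarrow> 'e oedge list \<Rightarrow> bool" where
  "is_edge_path E ini ter p \<longleftrightarrow> p \<noteq> [] \<and> fst ` set p \<subseteq> E \<and>
     (\<forall>k. Suc k < length p \<longrightarrow> oterm ini ter (p ! k) = oinit ini ter (p ! Suc k))"

text \<open>A graph map: vertex map fv, and fe e = f(e) for the positively oriented edge e;
  f(reverse e) is the reverse path.\<close>
definition graph_map :: "'v set \<Rightarrow> 'e set \<Rightarrow> ('e \<Rightarrow> 'v) \<Rightarrow> ('e \<Rightarrow> 'v) \<Rightarrow>
    ('v \<Rightarrow> 'v) \<Rightarrow> ('e \<Rightarrow> 'e oedge list) \<Rightarrow> bool" where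
  "graph_map V E ini ter fv fe \<longleftrightarrow> finite V \<and> finite E \<and>
     (\<forall>e\<in>E. ini e \<in> V \<and> ter e \<in> V) \<and> (\<forall>v\<in>V. fv v \<in> V) \<and>
     (\<forall>e\<in>E. is_edge_path E ini ter (fe e) \<and>
              oinit ini ter (hd (fe e)) = fv (ini e) \<and>
              oterm ini ter (last (fe e)) = fv (ter e))"

definition fo :: "('e \<Rightarrow> 'e oedge list) \<Rightarrow> 'e oedge \<Rightarrow> 'e oedge list" where
  "fo fe x = (if snd x then fe (fst x) else rev_path (fe (fst x)))"

text \<open>Image of a path: concatenation, no tightening.\<close>
definition fpath :: "('e \<Rightarrow> 'e oedge list) \<Rightarrow> 'e oedge list \<Rightarrow> 'e oedge list" where
  "fpath fe p = concat (map (fo fe) p)"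

definition fpow :: "('e \<Rightarrow> 'e oedge list) \<Rightarrow> nat \<Rightarrow> 'e \<Rightarrow> 'e oedge list" where
  "fpow fe n e = (fpath fe ^^ n) [(e, True)]"

definition traverses :: "'e oedge list \<Rightarrow> 'e \<Rightarrow> bool" where
  "traverses p e \<longleftrightarrow> e \<in> fst ` set p"

definition tmat :: "('e \<Rightarrow> 'e oedge list) \<Rightarrow> 'e \<Rightarrow> 'e \<Rightarrow> nat" where
  "tmat fe i j = length (filter (\<lambda>x. fst x = j) (fe i))"

fun mat_pow :: "'e set \<Rightarrow> ('e \<Rightarrow> 'e \<Rightarrow> nat) \<Rightarrow> nat \<Rightarrow> 'e \<Rightarrow> 'e \<Rightarrow> nat" where
  "mat_pow E T 0 i j = (if i = j then 1 else 0)"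
| "mat_pow E T (Suc n) i j = (\<Sum>k\<in>E. mat_pow E T n i k * T k j)"

definition irreducible_matrix :: "'e set \<Rightarrow> ('e \<Rightarrow> 'e \<Rightarrow> nat) \<Rightarrow> bool" where
  "irreducible_matrix E T \<longleftrightarrow> (\<forall>i\<in>E. \<forall>j\<in>E. \<exists>n>0. mat_pow E T n i j > 0)"

text \<open>Valence: number of oriented edges starting at v (loops counted twice).\<close>
definition valence :: "'e set \<Rightarrow> ('e \<Rightarrow> 'v) \<Rightarrow> ('e \<Rightarrow> 'v) \<Rightarrow> 'v \<Rightarrow> nat" where
  "valence E ini ter v = card {e\<in>E. ini e = v} + card {e\<in>E. ter e = v}"

definition irreducible_map :: "'v set \<Rightarrow> 'e set \<Rightarrow> ('e \<Rightarrow> 'v) \<Rightarrow> ('e \<Rightarrow> 'v) \<Rightarrow>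
    ('e \<Rightarrow> 'e oedge list) \<Rightarrow> bool" where
  "irreducible_map V E ini ter fe \<longleftrightarrow> irreducible_matrix E (tmat fe) \<and>
     (\<forall>v\<in>V. valence E ini ter v \<ge> 3)"

definition expanding :: "'e set \<Rightarrow> ('e \<Rightarrow> 'e oedge list) \<Rightarrow> bool" where
  "expanding E fe \<longleftrightarrow> (\<forall>e\<in>E. filterlim (\<lambda>n. length (fpow fe n e)) at_top at_top)"

definition mixing :: "('e \<Rightarrow> 'e oedge list) \<Rightarrow> 'e \<Rightarrow> bool" where
  "mixing fe e \<longleftrightarrow> length (fe e) > 1"

definition surplus :: "'e set \<Rightarrow> ('e \<Rightarrow> 'e oedge list) \<Rightarrow> 'e \<Rightarrow> bool" where
  "surplus E fe e \<longleftrightarrow> \<not> mixing fe e \<and>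
     (\<exists>u\<in>E. u \<noteq> e \<and> (fe e = fe u \<or> fe e = rev_path (fe u)))"

definition stack_gen :: "'e set \<Rightarrow> ('e \<Rightarrow> 'e oedge list) \<Rightarrow> 'e rel" where
  "stack_gen E fe = {(e, fst (hd (fe e))) | e. e \<in> E \<and> \<not> mixing fe e \<and> \<not> surplus E fe e}"

definition stack_rel :: "'e set \<Rightarrow> ('e \<Rightarrow> 'e oedge list) \<Rightarrow> 'e rel" where
  "stack_rel E fe = Id_on E \<union> (stack_gen E fe \<union> (stack_gen E fe)\<inverse>)\<^sup>+"

definition stacks :: "'e set \<Rightarrow> ('e \<Rightarrow> 'e oedge list) \<Rightarrow> 'e set set" where
  "stacks E fe = E // stack_rel E fe"

definition final_edge :: "'e set \<Rightarrow> ('e \<Rightarrow> 'e oedge list) \<Rightarrow> 'e set \<Rightarrow> 'e" where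
  "final_edge E fe K = (THE a. a \<in> K \<and> (mixing fe a \<or> surplus E fe a))"

definition weight :: "'e set \<Rightarrow> ('e \<Rightarrow> 'e oedge list) \<Rightarrow> 'e set \<Rightarrow> int" where
  "weight E fe K = int (length (fe (final_edge E fe K))) - 1"

definition sg_edge :: "'e set \<Rightarrow> ('e \<Rightarrow> 'e oedge list) \<Rightarrow> 'e set \<Rightarrow> 'e set \<Rightarrow> bool" where
  "sg_edge E fe K L \<longleftrightarrow> K \<in> stacks E fe \<and> L \<in> stacks E fe \<and>
     (\<exists>x\<in>L. traverses (fe (final_edge E fe K)) x)"

definition sg_len :: "'e set \<Rightarrow> ('e \<Rightarrow> 'e oedge list) \<Rightarrow> 'e set \<Rightarrow> 'e set \<Rightarrow> nat" where
  "sg_len E fe K L = (LEAST s. s \<ge> 1 \<and>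
     traverses (fpow fe s (final_edge E fe K)) (final_edge E fe L))"

definition sg_path :: "'e set \<Rightarrow> ('e \<Rightarrow> 'e oedge list) \<Rightarrow> 'e set list \<Rightarrow> bool" where
  "sg_path E fe Ks \<longleftrightarrow> Ks \<noteq> [] \<and>
     (\<forall>k. Suc k < length Ks \<longrightarrow> sg_edge E fe (Ks ! k) (Ks ! Suc k))"

definition sg_path_len :: "'e set \<Rightarrow> ('e \<Rightarrow> 'e oedge list) \<Rightarrow> 'e set list \<Rightarrow> nat" where
  "sg_path_len E fe Ks = (\<Sum>k<length Ks - 1. sg_len E fe (Ks ! k) (Ks ! Suc k))"

definition dball :: "'e set \<Rightarrow> ('e \<Rightarrow> 'e oedge list) \<Rightarrow> nat \<Rightarrow> 'e set \<Rightarrow> 'e set set" where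
  "dball E fe d K = {L. \<exists>Ks. sg_path E fe Ks \<and> hd Ks = K \<and> last Ks = L \<and>
                              sg_path_len E fe Ks \<le> d}"

end

theory Submission
  imports Defs
begin

text \<open>
  If [K, L] is an edge of the stack graph, f(\<alpha>_K) crosses an edge of L, and the
  non-mixing, non-surplus edges of L are carried one onto the next until \<alpha>_L; so
  f^s(\<alpha>_K) traverses \<alpha>_L for s = s([K, L]), and along a directed path of length at
  most d the final edge of every stack of B_d(K_i) is traversed by some f^m(\<alpha>_i) with
  m \<le> d.  Distinct stacks have distinct final edges.  Every edge a crossed by one of
  f^0(\<alpha>_i), ..., f^d(\<alpha>_i) makes the length grow by at least |f(a)| - 1 at the next
  iterate, so |f^(d+1)(\<alpha>_i)| - 1 dominates the sum of |f(a)| - 1 over these edges, and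
  hence the sum of the weights.  Expansion only serves to guarantee that every stack
  has a final edge.
\<close>

lemma graph_map_edge_image:
  assumes "graph_map V E ini ter fv fe" and "e \<in> E"
  shows "fe e \<noteq> []" and "fst ` set (fe e) \<subseteq> E"
  using assms by (simp_all add: graph_map_def is_edge_path_def)

lemma fpath_Nil [simp]: "fpath fe [] = []"
  by (simp add: fpath_def)

lemma fpath_Cons [simp]: "fpath fe (x # p) = fo fe x @ fpath fe p"
  by (simp add: fpath_def)

lemma fst_set_rev_path [simp]: "fst ` set (rev_path p) = fst ` set p"
  by (force simp: rev_path_def flip_def image_iff)

lemma fst_set_fo [simp]: "fst ` set (fo fe x) = fst ` set (fe (fst x))"
  by (simp add: fo_def)

lemma length_fo [simp]: "length (fo fe x) = length (fe (fst x))"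
  by (simp add: fo_def rev_path_def)

lemma fst_set_fpath: "fst ` set (fpath fe p) = (\<Union>e\<in>fst ` set p. fst ` set (fe e))"
  by (induction p) (simp_all add: image_Un)

lemma length_fpath: "length (fpath fe p) = (\<Sum>x\<leftarrow>p. length (fe (fst x)))"
  by (induction p) auto

lemma fpow_0 [simp]: "fpow fe 0 e = [(e, True)]"
  by (simp add: fpow_def)

lemma fpow_Suc: "fpow fe (Suc n) e = (fpath fe ^^ n) (fe e)"
  unfolding fpow_def funpow_Suc_right o_apply by (simp add: fo_def)

lemma fpow_Suc_0 [simp]: "fpow fe (Suc 0) e = fe e"
  by (simp add: fpow_Suc)

lemma fst_set_funpow_fpath:
  "fst ` set ((fpath fe ^^ n) p) = (\<Union>e\<in>fst ` set p. fst ` set (fpow fe n e))"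
proof (induction n arbitrary: p)
  case 0
  then show ?case by auto
next
  case (Suc n)
  have "fst ` set ((fpath fe ^^ Suc n) p) = fst ` set ((fpath fe ^^ n) (fpath fe p))"
    unfolding funpow_Suc_right o_apply ..
  also have "\<dots> = (\<Union>e\<in>fst ` set p. \<Union>e'\<in>fst ` set (fe e). fst ` set (fpow fe n e'))"
    by (simp add: Suc.IH fst_set_fpath)
  also have "\<dots> = (\<Union>e\<in>fst ` set p. fst ` set (fpow fe (Suc n) e))"
    by (simp add: fpow_Suc Suc.IH)
  finally show ?case .
qed

lemma traverses_fpow_trans:
  assumes "traverses (fpow fe n a) b" and "traverses (fpow fe m b) c"
  shows "traverses (fpow fe (n + m) a) c"
proof -
  have "fpow fe (n + m) a = (fpath fe ^^ m) (fpow fe n a)"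
    by (simp only: fpow_def add.commute[of n m] funpow_add o_apply)
  with assms show ?thesis
    unfolding traverses_def by (simp add: fst_set_funpow_fpath) blast
qed

lemma single_valued_rtrancl_sink_iff:
  assumes "single_valued S" and "a \<notin> Domain S" and "(u, v) \<in> (S \<union> S\<inverse>)\<^sup>*"
  shows "(u, a) \<in> S\<^sup>* \<longleftrightarrow> (v, a) \<in> S\<^sup>*"
proof -
  have step_iff: "(x, a) \<in> S\<^sup>* \<longleftrightarrow> (y, a) \<in> S\<^sup>*" if xy: "(x, y) \<in> S" for x y
  proof
    assume "(x, a) \<in> S\<^sup>*"
    then show "(y, a) \<in> S\<^sup>*"
    proof (cases rule: converse_rtranclE)
      case base
      then show ?thesis using xy assms(2) by blast
    next
      case (step z)
      then show ?thesis using xy single_valuedD[OF assms(1)] by blast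
    qed
  qed (rule converse_rtrancl_into_rtrancl[OF xy])
  from assms(3) show ?thesis
    by (induction rule: rtrancl_induct) (auto simp: step_iff)
qed

lemma single_valued_stack_gen: "single_valued (stack_gen E fe)"
  by (auto simp: single_valued_def stack_gen_def)

lemma Domain_stack_gen:
  "Domain (stack_gen E fe) = {e \<in> E. \<not> mixing fe e \<and> \<not> surplus E fe e}"
  by (auto simp: stack_gen_def)

lemma stack_gen_traverses:
  assumes "graph_map V E ini ter fv fe" and "(e, e') \<in> stack_gen E fe"
  shows "e \<in> E" and "traverses (fe e) e'"
proof -
  show "e \<in> E" using assms(2) by (simp add: stack_gen_def)
  then show "traverses (fe e) e'"
    using assms(2) graph_map_edge_image(1)[OF assms(1)] by (auto simp: stack_gen_def traverses_def)
qed

lemma stack_gen_subset: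
  assumes "graph_map V E ini ter fv fe"
  shows "stack_gen E fe \<subseteq> E \<times> E"
  using stack_gen_traverses[OF assms] graph_map_edge_image(2)[OF assms]
  by (fastforce simp: traverses_def)

lemma rtrancl_stack_gen_in_edges:
  assumes "graph_map V E ini ter fv fe" and "e \<in> E" and "(e, e') \<in> (stack_gen E fe)\<^sup>*"
  shows "e' \<in> E"
  using assms(3,2) stack_gen_subset[OF assms(1)] by (induction rule: rtrancl_induct) auto

lemma rtrancl_stack_gen_traverses:
  assumes "graph_map V E ini ter fv fe" and "(e, e') \<in> (stack_gen E fe)\<^sup>*"
  shows "\<exists>t. traverses (fpow fe t e) e'"
  using assms(2)
proof (induction rule: rtrancl_induct)
  case base
  have "traverses (fpow fe 0 e) e" by (simp add: traverses_def)
  then show ?case ..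
next
  case (step y z)
  then obtain t where "traverses (fpow fe t e) y" by blast
  moreover have "traverses (fpow fe (Suc 0) y) z"
    using stack_gen_traverses(2)[OF assms(1) step(2)] by simp
  ultimately show ?case by (blast intro: traverses_fpow_trans)
qed

text \<open>Along a chain of non-mixing, non-surplus edges all iterates f^n(e) have length 1,
  which expansion forbids.\<close>
lemma expanding_reaches_mixing_or_surplus:
  assumes gm: "graph_map V E ini ter fv fe" and "expanding E fe" and "e \<in> E"
  shows "\<exists>a. (e, a) \<in> (stack_gen E fe)\<^sup>* \<and> (mixing fe a \<or> surplus E fe a)"
proof (rule ccontr)
  let ?R = "(stack_gen E fe)\<^sup>* `` {e}"
  assume no_final: "\<not> ?thesis"
  have regular: "\<not> mixing fe y \<and> \<not> surplus E fe y" if "y \<in> ?R" for y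
    using no_final that by blast
  have single: "length (fe y) = 1 \<and> fst ` set (fe y) \<subseteq> ?R" if y: "y \<in> ?R" for y
  proof -
    have "y \<in> E"
      using y rtrancl_stack_gen_in_edges[OF gm \<open>e \<in> E\<close>] by blast
    then have "fe y \<noteq> []"
      by (rule graph_map_edge_image(1)[OF gm])
    with regular[OF y] obtain x where fe_y: "fe y = [x]"
      by (cases "fe y") (auto simp: mixing_def)
    have "(y, fst x) \<in> stack_gen E fe"
      using regular[OF y] \<open>y \<in> E\<close> fe_y by (auto simp: stack_gen_def)
    with y show ?thesis
      using fe_y by (auto intro: rtrancl_into_rtrancl)
  qed
  have "length (fpow fe n e) = 1 \<and> fst ` set (fpow fe n e) \<subseteq> ?R" for n
  proof (induction n)
    case 0
    then show ?case by simp
  next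
    case (Suc n)
    let ?p = "fpow fe n e"
    have "fpow fe (Suc n) e = fpath fe ?p" by (simp add: fpow_def)
    moreover have "(\<Sum>x\<leftarrow>?p. length (fe (fst x))) = (\<Sum>x\<leftarrow>?p. 1)"
      using Suc.IH single by (intro arg_cong[where f = sum_list] map_cong) auto
    ultimately show ?case
      using Suc.IH single by (auto simp: length_fpath fst_set_fpath sum_list_triv)
  qed
  moreover have "eventually (\<lambda>n. 2 \<le> length (fpow fe n e)) at_top"
    using assms(2,3) by (simp add: expanding_def filterlim_at_top)
  ultimately show False
    by (auto simp: eventually_at_top_linorder)
qed

lemma stack_rel_Image_eq_basin:
  assumes gm: "graph_map V E ini ter fv fe" and "x \<in> E"
    and "(x, a) \<in> (stack_gen E fe)\<^sup>*" and a: "a \<notin> Domain (stack_gen E fe)"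
  shows "stack_rel E fe `` {x} = {y \<in> E. (y, a) \<in> (stack_gen E fe)\<^sup>*}"
proof -
  let ?S = "stack_gen E fe"
  have sym_E: "?S \<union> ?S\<inverse> \<subseteq> E \<times> E"
    using stack_gen_subset[OF gm] by blast
  have reach_iff: "(y, a) \<in> ?S\<^sup>*" if "(x, y) \<in> (?S \<union> ?S\<inverse>)\<^sup>*" for y
    using single_valued_rtrancl_sink_iff[OF single_valued_stack_gen a that] assms(3) by blast
  show ?thesis
  proof (intro equalityI subsetI)
    fix y assume "y \<in> stack_rel E fe `` {x}"
    then have "(x, y) \<in> Id_on E \<union> (?S \<union> ?S\<inverse>)\<^sup>+"
      by (simp add: stack_rel_def)
    then show "y \<in> {y \<in> E. (y, a) \<in> ?S\<^sup>*}"
      using trancl_subset_Sigma[OF sym_E] reach_iff \<open>x \<in> E\<close> assms(3)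
      by (auto dest: trancl_into_rtrancl)
  next
    fix y assume y: "y \<in> {y \<in> E. (y, a) \<in> ?S\<^sup>*}"
    have "(x, a) \<in> (?S \<union> ?S\<inverse>)\<^sup>*" and "(a, y) \<in> (?S \<union> ?S\<inverse>)\<^sup>*"
      using assms(3) y rtrancl_mono[of ?S "?S \<union> ?S\<inverse>"] rtrancl_mono[of "?S\<inverse>" "?S \<union> ?S\<inverse>"]
      by (auto simp: rtrancl_converse)
    then have "(x, y) \<in> (?S \<union> ?S\<inverse>)\<^sup>*" by (rule rtrancl_trans)
    then show "y \<in> stack_rel E fe `` {x}"
      using y by (auto simp: stack_rel_def dest: rtranclD)
  qed
qed

lemma final_edge_basin:
  assumes "a \<in> E" and "mixing fe a \<or> surplus E fe a"
  shows "final_edge E fe {y \<in> E. (y, a) \<in> (stack_gen E fe)\<^sup>*} = a"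
  unfolding final_edge_def
proof (rule the_equality)
  fix a' assume a': "a' \<in> {y \<in> E. (y, a) \<in> (stack_gen E fe)\<^sup>*} \<and> (mixing fe a' \<or> surplus E fe a')"
  then have "a' \<notin> Domain (stack_gen E fe)"
    by (auto simp: Domain_stack_gen)
  with a' show "a' = a"
    by (auto elim: converse_rtranclE)
qed (use assms in simp)

lemma stack_eq_basin:
  assumes gm: "graph_map V E ini ter fv fe" and ex: "expanding E fe" and K: "K \<in> stacks E fe"
  shows "final_edge E fe K \<in> K"
    and "K = {y \<in> E. (y, final_edge E fe K) \<in> (stack_gen E fe)\<^sup>*}"
proof -
  obtain x where "x \<in> E" and K_eq: "K = stack_rel E fe `` {x}"
    using K by (auto simp: stacks_def elim: quotientE)
  obtain a where xa: "(x, a) \<in> (stack_gen E fe)\<^sup>*" and a: "mixing fe a \<or> surplus E fe a"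
    using expanding_reaches_mixing_or_surplus[OF gm ex \<open>x \<in> E\<close>] by blast
  have "a \<in> E"
    using rtrancl_stack_gen_in_edges[OF gm \<open>x \<in> E\<close> xa] .
  have basin: "K = {y \<in> E. (y, a) \<in> (stack_gen E fe)\<^sup>*}"
    unfolding K_eq using stack_rel_Image_eq_basin[OF gm \<open>x \<in> E\<close> xa] a
    by (simp add: Domain_stack_gen)
  moreover have "final_edge E fe K = a"
    unfolding basin using final_edge_basin[OF \<open>a \<in> E\<close> a] .
  ultimately show "final_edge E fe K \<in> K" and "K = {y \<in> E. (y, final_edge E fe K) \<in> (stack_gen E fe)\<^sup>*}"
    using \<open>a \<in> E\<close> by auto
qed

lemma inj_on_final_edge:
  assumes "graph_map V E ini ter fv fe" and "expanding E fe"
  shows "inj_on (final_edge E fe) (stacks E fe)"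
  by (rule inj_onI) (metis stack_eq_basin(2)[OF assms])

lemma final_edge_in_edges:
  assumes "graph_map V E ini ter fv fe" and "expanding E fe" and "K \<in> stacks E fe"
  shows "final_edge E fe K \<in> E"
  using stack_eq_basin[OF assms] by blast

lemma sg_edge_traverses:
  assumes gm: "graph_map V E ini ter fv fe" and ex: "expanding E fe" and KL: "sg_edge E fe K L"
  shows "traverses (fpow fe (sg_len E fe K L) (final_edge E fe K)) (final_edge E fe L)"
proof -
  obtain x where "x \<in> L" and x: "traverses (fpow fe (Suc 0) (final_edge E fe K)) x"
    and L: "L \<in> stacks E fe"
    using KL by (auto simp: sg_edge_def)
  then have "(x, final_edge E fe L) \<in> (stack_gen E fe)\<^sup>*"
    using stack_eq_basin(2)[OF gm ex L] by blast
  then obtain t where "traverses (fpow fe t x) (final_edge E fe L)"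
    using rtrancl_stack_gen_traverses[OF gm] by blast
  with x have "traverses (fpow fe (Suc 0 + t) (final_edge E fe K)) (final_edge E fe L)"
    by (rule traverses_fpow_trans)
  then have "\<exists>s. s \<ge> 1 \<and> traverses (fpow fe s (final_edge E fe K)) (final_edge E fe L)"
    by force
  then show ?thesis
    unfolding sg_len_def by (rule LeastI2_ex) blast
qed

lemma sg_path_Cons_Cons:
  "sg_path E fe (K # L # Ks) \<longleftrightarrow> sg_edge E fe K L \<and> sg_path E fe (L # Ks)"
  unfolding sg_path_def by (auto simp: less_Suc_eq_0_disj)

lemma sg_path_len_Cons_Cons:
  "sg_path_len E fe (K # L # Ks) = sg_len E fe K L + sg_path_len E fe (L # Ks)"
  by (simp add: sg_path_len_def sum.lessThan_Suc_shift del: sum.lessThan_Suc)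

lemma sg_path_traverses:
  assumes gm: "graph_map V E ini ter fv fe" and ex: "expanding E fe"
  shows "sg_path E fe (K # Ks) \<Longrightarrow> K \<in> stacks E fe \<Longrightarrow> last (K # Ks) \<in> stacks E fe \<and>
    traverses (fpow fe (sg_path_len E fe (K # Ks)) (final_edge E fe K)) (final_edge E fe (last (K # Ks)))"
proof (induction Ks arbitrary: K)
  case Nil
  then show ?case by (simp add: sg_path_len_def traverses_def)
next
  case (Cons L Ks)
  have KL: "sg_edge E fe K L" and path: "sg_path E fe (L # Ks)"
    using Cons.prems(1) by (simp_all add: sg_path_Cons_Cons)
  then have IH: "last (L # Ks) \<in> stacks E fe \<and>
      traverses (fpow fe (sg_path_len E fe (L # Ks)) (final_edge E fe L)) (final_edge E fe (last (L # Ks)))"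
    by (intro Cons.IH) (simp_all add: sg_edge_def)
  then have "traverses (fpow fe (sg_len E fe K L + sg_path_len E fe (L # Ks)) (final_edge E fe K))
      (final_edge E fe (last (L # Ks)))"
    using traverses_fpow_trans[OF sg_edge_traverses[OF gm ex KL]] by blast
  moreover have "last (K # L # Ks) = last (L # Ks)" by simp
  ultimately show ?case
    using IH by (simp only: sg_path_len_Cons_Cons)
qed

lemma dball_traverses:
  assumes "graph_map V E ini ter fv fe" and "expanding E fe" and "K \<in> stacks E fe"
    and "L \<in> dball E fe d K"
  shows "L \<in> stacks E fe \<and> (\<exists>m\<le>d. traverses (fpow fe m (final_edge E fe K)) (final_edge E fe L))"
proof -
  obtain Ks where Ks: "sg_path E fe Ks" "hd Ks = K" "last Ks = L" "sg_path_len E fe Ks \<le> d"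
    using assms(4) by (auto simp: dball_def)
  then have Ks_eq: "K # tl Ks = Ks"
    by (metis list.collapse sg_path_def)
  have "last Ks \<in> stacks E fe \<and>
      traverses (fpow fe (sg_path_len E fe Ks) (final_edge E fe K)) (final_edge E fe (last Ks))"
    using sg_path_traverses[OF assms(1,2), of K "tl Ks"] Ks(1) assms(3) unfolding Ks_eq by blast
  with Ks(3,4) show ?thesis by blast
qed

lemma sum_set_le_sum_list: "sum (f :: 'a \<Rightarrow> nat) (set xs) \<le> sum_list (map f xs)"
  by (induction xs) (auto simp: sum.insert_if)

lemma length_fpath_eq:
  assumes "\<forall>x\<in>set p. fe (fst x) \<noteq> []"
  shows "length (fpath fe p) = length p + (\<Sum>x\<leftarrow>p. length (fe (fst x)) - 1)"
  using assms by (induction p) auto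

lemma length_funpow_fpath_ge:
  assumes gm: "graph_map V E ini ter fv fe" and "fst ` set p \<subseteq> E"
  shows "length p + (\<Sum>a\<in>(\<Union>m<n. fst ` set ((fpath fe ^^ m) p)). length (fe a) - 1)
           \<le> length ((fpath fe ^^ n) p)"
  using assms(2)
proof (induction n arbitrary: p)
  case 0
  then show ?case by simp
next
  case (Suc n)
  let ?c = "\<lambda>a. length (fe a) - 1"
  let ?U = "\<Union>m<n. fst ` set ((fpath fe ^^ m) (fpath fe p))"
  have "(\<Union>m<Suc n. fst ` set ((fpath fe ^^ m) p)) = fst ` set p \<union> ?U"
    by (simp add: lessThan_Suc_eq_insert_0 funpow_Suc_right del: funpow.simps)
  then have "sum ?c (\<Union>m<Suc n. fst ` set ((fpath fe ^^ m) p)) \<le> sum ?c (fst ` set p) + sum ?c ?U"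
    by (simp add: sum_Un_nat)
  also have "sum ?c (fst ` set p) \<le> (\<Sum>x\<leftarrow>p. ?c (fst x))"
    using sum_set_le_sum_list[of ?c "map fst p"] by (simp add: o_def)
  also have "length p + ((\<Sum>x\<leftarrow>p. ?c (fst x)) + sum ?c ?U) = length (fpath fe p) + sum ?c ?U"
    using Suc.prems graph_map_edge_image(1)[OF gm] by (subst length_fpath_eq) auto
  also have "\<dots> \<le> length ((fpath fe ^^ n) (fpath fe p))"
    using Suc.prems graph_map_edge_image(2)[OF gm] by (intro Suc.IH) (auto simp: fst_set_fpath)
  finally show ?case
    by (simp add: funpow_Suc_right del: funpow.simps)
qed

lemma length_fpow_ge:
  assumes "graph_map V E ini ter fv fe" and "e \<in> E"
  shows "1 + (\<Sum>a\<in>(\<Union>m<n. fst ` set (fpow fe m e)). length (fe a) - 1) \<le> length (fpow fe n e)"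
  using length_funpow_fpath_ge[OF assms(1), of "[(e, True)]" n] assms(2)
  unfolding fpow_def by simp

lemma weight_eq:
  assumes "graph_map V E ini ter fv fe" and "expanding E fe" and "K \<in> stacks E fe"
  shows "weight E fe K = int (length (fe (final_edge E fe K)) - 1)"
proof -
  have "fe (final_edge E fe K) \<noteq> []"
    using graph_map_edge_image(1)[OF assms(1) final_edge_in_edges[OF assms]] .
  then show ?thesis
    by (simp add: weight_def of_nat_diff Suc_le_eq)
qed

theorem lemma4p7:
  fixes V :: "'v set" and E :: "'e set" and ini ter :: "'e \<Rightarrow> 'v"
    and fv :: "'v \<Rightarrow> 'v" and fe :: "'e \<Rightarrow> ('e \<times> bool) list"
    and K :: "'e set" and d :: nat
  assumes "graph_map V E ini ter fv fe"
    and "irreducible_map V E ini ter fe"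
    and "expanding E fe"
    and "K \<in> stacks E fe"
  shows "int (length (fpow fe (d + 1) (final_edge E fe K)))
           \<ge> 1 + (\<Sum>L\<in>dball E fe d K. weight E fe L)"
proof -
  note gm = assms(1) and ex = assms(3)
  define \<alpha> where "\<alpha> = final_edge E fe K"
  define U where "U = (\<Union>m<d + 1. fst ` set (fpow fe m \<alpha>))"
  let ?c = "\<lambda>a. length (fe a) - 1"
  have ball: "dball E fe d K \<subseteq> stacks E fe" and final_U: "final_edge E fe ` dball E fe d K \<subseteq> U"
    using dball_traverses[OF gm ex assms(4)] unfolding U_def \<alpha>_def traverses_def by fastforce+
  have "(\<Sum>L\<in>dball E fe d K. weight E fe L) = (\<Sum>L\<in>dball E fe d K. int (?c (final_edge E fe L)))"
    using ball by (intro sum.cong) (auto simp: weight_eq[OF gm ex])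
  also have "\<dots> = (\<Sum>a\<in>final_edge E fe ` dball E fe d K. int (?c a))"
    using inj_on_subset[OF inj_on_final_edge[OF gm ex] ball] by (simp add: sum.reindex)
  also have "\<dots> \<le> (\<Sum>a\<in>U. int (?c a))"
    using final_U by (intro sum_mono2) (auto simp: U_def)
  also have "\<dots> = int (\<Sum>a\<in>U. ?c a)"
    by (rule of_nat_sum[symmetric])
  also have "\<dots> \<le> int (length (fpow fe (d + 1) \<alpha>)) - 1"
    using length_fpow_ge[OF gm final_edge_in_edges[OF gm ex assms(4)], of "d + 1"]
    unfolding U_def \<alpha>_def by linarith
  finally show ?thesis
    unfolding \<alpha>_def by simp
qed

end
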